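(* Assume (B1) and (B3). Then for every $\rho\in\mathbb R$ the integral equation $$u(r)=\rho-\int_0^r t^{-\frac{\alpha}{\beta+1}}\Big(\int_0^t s^{\gamma}e^{f(u(s))}ds\Big)^{\frac{1}{\beta+1}}dt,\qquad r\ge0,$$ has a unique continuous solution on $[0,\infty)$.
   Context: (B1) $f\in C^1(\mathbb R,\mathbb R)$, $f'>0$, $\lim_{u\to+\infty}f(u)=+\infty$. (B3) $\alpha>\beta+1>0$ and $\theta=\gamma+2+\beta-\alpha>0$. This integral equation is equivalent to $L(u)+e^{f(u)}=0$, $u(0)=\rho$, $u'(0)=0$, with $L(u)=r^{-\gamma}(r^\alpha|u'|^\beta u')'$. *)

theory Defs
  imports "HOL-Analysis.Analysis"
begin

definition inner_integrand :: "(real \<Rightarrow> real) \<Rightarrow> real \<Rightarrow> (real \<Rightarrow> real) \<Rightarrow> real \<Rightarrow> real" where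
  "inner_integrand f \<gamma> u s = s powr \<gamma> * exp (f (u s))"

definition outer_integrand :: "(real \<Rightarrow> real) \<Rightarrow> real \<Rightarrow> real \<Rightarrow> real \<Rightarrow> (real \<Rightarrow> real) \<Rightarrow> real \<Rightarrow> real" where
  "outer_integrand f \<alpha> \<beta> \<gamma> u t =
     t powr (- \<alpha> / (\<beta> + 1)) * (integral {0..t} (inner_integrand f \<gamma> u)) powr (1 / (\<beta> + 1))"

definition solves_IE :: "(real \<Rightarrow> real) \<Rightarrow> real \<Rightarrow> real \<Rightarrow> real \<Rightarrow> real \<Rightarrow> (real \<Rightarrow> real) \<Rightarrow> bool" where
  "solves_IE f \<alpha> \<beta> \<gamma> \<rho> u \<longleftrightarrow>
     continuous_on {0..} u \<and>
     (\<forall>t\<ge>0. inner_integrand f \<gamma> u integrable_on {0..t}) \<and>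
     (\<forall>r\<ge>0. outer_integrand f \<alpha> \<beta> \<gamma> u integrable_on {0..r} \<and>
             u r = \<rho> - integral {0..r} (outer_integrand f \<alpha> \<beta> \<gamma> u))"

end

theory Submission
  imports Defs
begin

text \<open>
  For continuous u on [0,R] with values in [m,\<rho>] the inner integral lies between
  e^f(m) t^(\<gamma>+1)/(\<gamma>+1) and e^f(\<rho>) t^(\<gamma>+1)/(\<gamma>+1), so the outer integrand is
  bounded by a multiple of t^\<kappa> with \<kappa> = (\<gamma>+1-\<alpha>)/(\<beta>+1) > -1; this is where \<theta> > 0
  enters. Hence the right-hand side of the equation maps the continuous functions with
  values in [\<rho> - C R^(\<kappa>+1)/(\<kappa>+1), \<rho>] into themselves. Since e^f is Lipschitz on
  bounded intervals and x^(1/(\<beta>+1)) is Lipschitz on intervals bounded away from 0, the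
  map is a contraction for the sup norm weighted by exp(l t^(\<kappa>+1)/(\<kappa>+1)) once l is
  large. This gives a unique solution on every [0,R], and these glue to the unique
  solution on [0,\<infinity>).
\<close>

lemma integrable_on_Icc_if_dominated_on_Ioc:
  fixes h g :: "real \<Rightarrow> real"
  assumes "continuous_on {a<..b} h" "g integrable_on {a..b}"
    and "\<And>x. x \<in> {a<..b} \<Longrightarrow> \<bar>h x\<bar> \<le> g x"
  shows "h integrable_on {a..b}"
proof -
  have neg: "negligible (({a..b} - {a<..b}) \<union> ({a<..b} - {a..b}))"
    by (rule negligible_subset[of "{a}"]) auto
  have g: "g integrable_on {a<..b}"
    using assms(2) integrable_spike_set_eq[OF neg] by blast
  have "h integrable_on {a<..b}"
    by (rule measurable_bounded_by_integrable_imp_integrable_real[OF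
          continuous_imp_measurable_on_sets_lebesgue[OF assms(1)] g assms(3)]) auto
  then show ?thesis
    using integrable_spike_set_eq[OF neg] by blast
qed

lemma has_integral_powr_mult_exp_powr:
  fixes a r l :: real
  assumes "a > -1" "r \<ge> 0" "l \<noteq> 0"
  shows "((\<lambda>s. s powr a * exp (l * (s powr (a + 1) / (a + 1)))) has_integral
           (exp (l * (r powr (a + 1) / (a + 1))) - 1) / l) {0..r}"
proof -
  let ?F = "\<lambda>s. exp (l * (s powr (a + 1) / (a + 1))) / l"
  have "((\<lambda>s. s powr a * exp (l * (s powr (a + 1) / (a + 1)))) has_integral ?F r - ?F 0) {0..r}"
  proof (rule fundamental_theorem_of_calculus_interior)
    show "continuous_on {0..r} ?F"
      using assms by (intro continuous_intros continuous_on_powr') auto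
    fix x assume "x \<in> {0<..<r}"
    then have "(?F has_real_derivative
        exp (l * (x powr (a + 1) / (a + 1))) * (l * ((a + 1) * x powr (a + 1 - 1) / (a + 1))) / l) (at x)"
      by (auto intro!: derivative_eq_intros)
    then show "(?F has_vector_derivative x powr a * exp (l * (x powr (a + 1) / (a + 1)))) (at x)"
      using assms by (simp add: has_real_derivative_iff_has_vector_derivative mult.commute)
  qed (use assms in auto)
  also have "?F r - ?F 0 = (exp (l * (r powr (a + 1) / (a + 1))) - 1) / l"
    by (simp add: diff_divide_distrib)
  finally show ?thesis .
qed

lemma abs_powr_diff_le:
  fixes a b x y p :: real
  assumes "0 < a" "x \<in> {a..b}" "y \<in> {a..b}"
  shows "\<bar>x powr p - y powr p\<bar> \<le> \<bar>p\<bar> * (a powr (p - 1) + b powr (p - 1)) * \<bar>x - y\<bar>"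
proof (rule field_differentiable_bound[of "{a..b}", unfolded real_norm_def])
  fix z :: real assume z: "z \<in> {a..b}"
  then show "((\<lambda>z. z powr p) has_field_derivative p * z powr (p - 1)) (at z within {a..b})"
    using assms by (auto intro!: has_field_derivative_at_within[OF has_real_derivative_powr])
  have "z powr (p - 1) \<le> a powr (p - 1) + b powr (p - 1)"
  proof (cases "p - 1 \<ge> 0")
    case True
    then have "z powr (p - 1) \<le> b powr (p - 1)" using assms z by (intro powr_mono2) auto
    then show ?thesis by (simp add: add_increasing)
  next
    case False
    then have "z powr (p - 1) \<le> a powr (p - 1)" using assms z by (intro powr_mono2') auto
    then show ?thesis by (simp add: add_increasing2)
  qed
  then show "\<bar>p * z powr (p - 1)\<bar> \<le> \<bar>p\<bar> * (a powr (p - 1) + b powr (p - 1))"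
    by (simp add: abs_mult mult_left_mono)
qed (use assms in auto)

lemma lipschitz_on_Icc_if_continuous_deriv:
  fixes g g' :: "real \<Rightarrow> real"
  assumes "\<And>x. x \<in> {a..b} \<Longrightarrow> (g has_real_derivative g' x) (at x)"
    and "continuous_on {a..b} g'"
  obtains L where "L-lipschitz_on {a..b} g"
proof -
  obtain B where B: "B > 0" "\<And>x. x \<in> {a..b} \<Longrightarrow> \<bar>g' x\<bar> \<le> B"
    using compact_imp_bounded[OF compact_continuous_image[OF assms(2) compact_Icc]]
    by (auto simp: bounded_pos)
  have "B-lipschitz_on {a..b} g"
  proof (rule lipschitz_onI)
    fix x y assume "x \<in> {a..b}" "y \<in> {a..b}"
    then show "dist (g x) (g y) \<le> B * dist x y"
      using field_differentiable_bound[of "{a..b}" g g' B x y] has_field_derivative_at_within[OF assms(1)] B(2)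
      by (simp add: dist_real_def)
  qed (use B in simp)
  then show thesis by (rule that)
qed

lemma eq_0_if_abs_le_geometric:
  fixes x c C :: real
  assumes "0 \<le> c" "c < 1" "\<And>n. \<bar>x\<bar> \<le> c ^ n * C"
  shows "x = 0"
proof -
  have "(\<lambda>n. c ^ n * C) \<longlonglongrightarrow> 0 * C"
    using assms by (intro tendsto_mult LIMSEQ_power_zero tendsto_const) auto
  then have "\<bar>x\<bar> \<le> 0"
    using assms(3) by (intro LIMSEQ_le_const[of _ 0]) auto
  then show ?thesis by simp
qed

lemma continuous_on_atLeast_if_continuous_on_Icc:
  assumes "\<And>R. a \<le> R \<Longrightarrow> continuous_on {a..R} f"
  shows "continuous_on {a::real..} f"
  unfolding continuous_on_eq_continuous_within
proof
  fix x assume "x \<in> {a..}"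
  then have "continuous (at x within {a..x + 1}) f"
    using assms[of "x + 1"] by (simp add: continuous_on_eq_continuous_within)
  moreover have "at x within {a..} = at x within {a..x + 1}"
    by (rule at_within_nhd[of _ "{..<x + 1}"]) auto
  ultimately show "continuous (at x within {a..}) f"
    by simp
qed

definition continuous_into :: "real set \<Rightarrow> real set \<Rightarrow> (real \<Rightarrow> real) \<Rightarrow> bool" where
  "continuous_into K Y u \<longleftrightarrow> continuous_on K u \<and> u ` K \<subseteq> Y"

(* The contraction principle for the weighted sup norm sup |u - v| / w over K, stated
   for functions K -> {lo..hi} rather than on a metric space of such functions. *)
locale weighted_contraction =
  fixes K :: "real set" and lo hi :: real and w :: "real \<Rightarrow> real" and c :: real
    and \<Phi> :: "(real \<Rightarrow> real) \<Rightarrow> real \<Rightarrow> real"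
  assumes weight_ge_1: "\<And>s. s \<in> K \<Longrightarrow> 1 \<le> w s"
    and weight_bdd_above: "bdd_above (w ` K)"
    and factor_nonneg: "0 \<le> c" and factor_less_1: "c < 1"
    and contraction: "\<And>u v D s. continuous_into K {lo..hi} u \<Longrightarrow> continuous_into K {lo..hi} v \<Longrightarrow>
           0 \<le> D \<Longrightarrow> \<forall>t\<in>K. \<bar>u t - v t\<bar> \<le> D * w t \<Longrightarrow> s \<in> K \<Longrightarrow>
           \<bar>\<Phi> u s - \<Phi> v s\<bar> \<le> c * D * w s"
begin

lemma abs_diff_le_width_weight:
  assumes "continuous_into K {lo..hi} u" "continuous_into K {lo..hi} v" "s \<in> K"
  shows "\<bar>u s - v s\<bar> \<le> (hi - lo) * w s"
proof -
  have "u s \<in> {lo..hi}" "v s \<in> {lo..hi}"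
    using assms by (auto simp: continuous_into_def)
  then have "\<bar>u s - v s\<bar> \<le> (hi - lo) * 1" by auto
  also have "\<dots> \<le> (hi - lo) * w s"
    using \<open>u s \<in> {lo..hi}\<close> weight_ge_1[OF assms(3)] by (intro mult_left_mono) auto
  finally show ?thesis .
qed

lemma fixpoint_unique:
  assumes u: "continuous_into K {lo..hi} u" "\<forall>s\<in>K. \<Phi> u s = u s"
    and v: "continuous_into K {lo..hi} v" "\<forall>s\<in>K. \<Phi> v s = v s"
    and s: "s \<in> K"
  shows "u s = v s"
proof -
  have "\<forall>t\<in>K. \<bar>u t - v t\<bar> \<le> c ^ n * (hi - lo) * w t" for n
  proof (induction n)
    case 0
    then show ?case using abs_diff_le_width_weight[OF u(1) v(1)] by simp
  next
    case (Suc n)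
    have "hi - lo \<ge> 0"
      using u(1) s by (auto simp: continuous_into_def)
    then have "\<bar>\<Phi> u t - \<Phi> v t\<bar> \<le> c * (c ^ n * (hi - lo)) * w t" if "t \<in> K" for t
      using Suc factor_nonneg that by (intro contraction[OF u(1) v(1)]) (auto simp: mult.assoc)
    then show ?case using u(2) v(2) by (simp add: mult.assoc)
  qed
  then have "\<bar>u s - v s\<bar> \<le> c ^ n * ((hi - lo) * w s)" for n
    using s by (simp add: mult.assoc)
  then show ?thesis
    using eq_0_if_abs_le_geometric[OF factor_nonneg factor_less_1] by fastforce
qed

end

locale weighted_self_contraction = weighted_contraction +
  assumes maps_into: "\<And>u. continuous_into K {lo..hi} u \<Longrightarrow> continuous_into K {lo..hi} (\<Phi> u)"
    and lo_le_hi: "lo \<le> hi"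
begin

definition iterate :: "nat \<Rightarrow> real \<Rightarrow> real" where
  "iterate n = (\<Phi> ^^ n) (\<lambda>_. hi)"

definition step_bound :: real where
  "step_bound = (hi - lo) * max 1 (Sup (w ` K))"

definition fixpoint :: "real \<Rightarrow> real" where
  "fixpoint s = hi + (\<Sum>n. iterate (Suc n) s - iterate n s)"

lemma iterate_Suc: "iterate (Suc n) = \<Phi> (iterate n)"
  by (simp add: iterate_def)

lemma iterate_into: "continuous_into K {lo..hi} (iterate n)"
  by (induction n) (use lo_le_hi maps_into in \<open>auto simp: iterate_def continuous_into_def\<close>)

lemma step_bound_nonneg: "0 \<le> step_bound"
  using lo_le_hi by (simp add: step_bound_def)

lemma abs_iterate_step_le:
  assumes "s \<in> K"
  shows "\<bar>iterate (Suc n) s - iterate n s\<bar> \<le> c ^ n * step_bound"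
proof -
  have "\<forall>t\<in>K. \<bar>iterate (Suc n) t - iterate n t\<bar> \<le> c ^ n * (hi - lo) * w t"
  proof (induction n)
    case 0
    then show ?case using abs_diff_le_width_weight[OF iterate_into iterate_into] by simp
  next
    case (Suc n)
    have "\<bar>\<Phi> (iterate (Suc n)) t - \<Phi> (iterate n) t\<bar> \<le> c * (c ^ n * (hi - lo)) * w t" if "t \<in> K" for t
      using Suc lo_le_hi factor_nonneg that
      by (intro contraction[OF iterate_into iterate_into]) (auto simp: mult.assoc)
    then show ?case
      by (simp add: iterate_Suc[symmetric] mult.assoc)
  qed
  then have "\<bar>iterate (Suc n) s - iterate n s\<bar> \<le> c ^ n * (hi - lo) * w s"
    using assms by blast
  also have "\<dots> \<le> c ^ n * (hi - lo) * max 1 (Sup (w ` K))"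
    using cSUP_upper[OF assms weight_bdd_above] lo_le_hi factor_nonneg by (intro mult_left_mono) auto
  finally show ?thesis
    by (simp add: step_bound_def mult.assoc)
qed

lemma summable_geometric_step_bound: "summable (\<lambda>n. c ^ n * step_bound)"
  using factor_nonneg factor_less_1 by (intro summable_mult2 summable_geometric) auto

lemma summable_iterate_steps: "s \<in> K \<Longrightarrow> summable (\<lambda>n. iterate (Suc n) s - iterate n s)"
  by (rule summable_comparison_test'[OF summable_geometric_step_bound]) (use abs_iterate_step_le in auto)

lemma sum_iterate_steps: "(\<Sum>k<n. iterate (Suc k) s - iterate k s) = iterate n s - hi"
  using sum_lessThan_telescope[of "\<lambda>k. iterate k s" n] by (simp add: iterate_def)

lemma iterate_tendsto_fixpoint:
  assumes "s \<in> K"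
  shows "(\<lambda>n. iterate n s) \<longlonglongrightarrow> fixpoint s"
proof -
  have "(\<lambda>n. hi + (iterate n s - hi)) \<longlonglongrightarrow> fixpoint s"
    unfolding fixpoint_def sum_iterate_steps[symmetric]
    by (intro tendsto_add tendsto_const summable_LIMSEQ summable_iterate_steps assms)
  then show ?thesis
    by simp
qed

lemma abs_fixpoint_minus_iterate_le:
  assumes "s \<in> K"
  shows "\<bar>fixpoint s - iterate n s\<bar> \<le> c ^ n * (step_bound / (1 - c))"
proof -
  have "fixpoint s - iterate n s = (\<Sum>k. iterate (Suc (k + n)) s - iterate (k + n) s)"
    using suminf_minus_initial_segment[OF summable_iterate_steps[OF assms], of n]
    by (simp add: fixpoint_def sum_iterate_steps)
  also have "\<bar>\<dots>\<bar> \<le> (\<Sum>k. c ^ n * (c ^ k * step_bound))"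
  proof (rule norm_suminf_le[where 'a=real, unfolded real_norm_def])
    show "\<bar>iterate (Suc (k + n)) s - iterate (k + n) s\<bar> \<le> c ^ n * (c ^ k * step_bound)" for k
      using abs_iterate_step_le[OF assms, of "k + n"] by (simp add: power_add mult_ac)
  qed (rule summable_mult[OF summable_geometric_step_bound])
  also have "\<dots> = c ^ n * (step_bound / (1 - c))"
    using suminf_mult[OF summable_geometric_step_bound] suminf_mult2[OF summable_geometric, of c]
      suminf_geometric[of c] factor_nonneg factor_less_1 by simp
  finally show ?thesis .
qed

lemma fixpoint_into: "continuous_into K {lo..hi} fixpoint"
proof -
  have "uniform_limit K (\<lambda>n s. \<Sum>k<n. iterate (Suc k) s - iterate k s)
      (\<lambda>s. \<Sum>k. iterate (Suc k) s - iterate k s) sequentially"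
    by (rule Weierstrass_m_test[OF _ summable_geometric_step_bound]) (use abs_iterate_step_le in auto)
  then have "continuous_on K (\<lambda>s. \<Sum>k. iterate (Suc k) s - iterate k s)"
    using iterate_into by (intro uniform_limit_theorem) (auto simp: sum_iterate_steps continuous_into_def
        intro!: always_eventually continuous_intros)
  moreover have "fixpoint s \<in> {lo..hi}" if "s \<in> K" for s
  proof -
    have "iterate n s \<in> {lo..hi}" for n
      using iterate_into that by (auto simp: continuous_into_def image_subset_iff)
    then show ?thesis
      using LIMSEQ_le_const[OF iterate_tendsto_fixpoint[OF that]]
        LIMSEQ_le_const2[OF iterate_tendsto_fixpoint[OF that]] by auto
  qed
  ultimately show ?thesis
    by (auto simp: continuous_into_def fixpoint_def[abs_def] intro!: continuous_intros)
qed

lemma fixpoint_fixed: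
  assumes "s \<in> K"
  shows "\<Phi> fixpoint s = fixpoint s"
proof -
  define B where "B = step_bound / (1 - c)"
  have "0 \<le> B"
    using step_bound_nonneg factor_less_1 by (simp add: B_def)
  have "\<bar>\<Phi> fixpoint s - fixpoint s\<bar> \<le> c ^ n * (c * B * w s + c * B)" for n
  proof -
    have "\<forall>t\<in>K. \<bar>fixpoint t - iterate n t\<bar> \<le> c ^ n * B * w t"
    proof
      fix t assume t: "t \<in> K"
      have "\<bar>fixpoint t - iterate n t\<bar> \<le> c ^ n * B * 1"
        using abs_fixpoint_minus_iterate_le[OF t] by (simp add: B_def)
      also have "\<dots> \<le> c ^ n * B * w t"
        using weight_ge_1[OF t] \<open>0 \<le> B\<close> factor_nonneg by (intro mult_left_mono) auto
      finally show "\<bar>fixpoint t - iterate n t\<bar> \<le> c ^ n * B * w t" .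
    qed
    then have "\<bar>\<Phi> fixpoint s - iterate (Suc n) s\<bar> \<le> c * (c ^ n * B) * w s"
      unfolding iterate_Suc using \<open>0 \<le> B\<close> factor_nonneg
      by (intro contraction[OF fixpoint_into iterate_into _ _ assms]) auto
    moreover have "\<bar>iterate (Suc n) s - fixpoint s\<bar> \<le> c ^ n * (c * B)"
      using abs_fixpoint_minus_iterate_le[OF assms, of "Suc n"] by (simp add: B_def abs_minus_commute mult_ac)
    ultimately show ?thesis
      by (simp add: distrib_left mult_ac)
  qed
  then show ?thesis
    using eq_0_if_abs_le_geometric[OF factor_nonneg factor_less_1] by fastforce
qed

end

locale radial_integral_equation =
  fixes f :: "real \<Rightarrow> real" and \<alpha> \<beta> \<gamma> :: real
  assumes f_mono: "mono f"
    and f_continuous: "continuous_on UNIV f"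
    and exp_f_lipschitz: "\<And>a b. \<exists>L. L-lipschitz_on {a..b} (\<lambda>x. exp (f x))"
    and alpha_gt: "\<beta> + 1 < \<alpha>" and beta_gt: "0 < \<beta> + 1" and theta_pos: "0 < \<gamma> + 2 + \<beta> - \<alpha>"
begin

definition q :: real where
  "q = 1 / (\<beta> + 1)"

(* The exponent of t in t powr (- \<alpha> / (\<beta> + 1)) * (t powr (\<gamma> + 1)) powr q. *)
definition \<kappa> :: real where
  "\<kappa> = (\<gamma> + 1 - \<alpha>) / (\<beta> + 1)"

definition picard :: "real \<Rightarrow> (real \<Rightarrow> real) \<Rightarrow> real \<Rightarrow> real" where
  "picard \<rho> u r = \<rho> - integral {0..r} (outer_integrand f \<alpha> \<beta> \<gamma> u)"

(* A Bielecki weight: its derivative is l * s powr \<kappa> * weight l s, so integrating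
   s powr \<kappa> * weight l s gains the factor 1 / l (has_integral_weight). *)
definition weight :: "real \<Rightarrow> real \<Rightarrow> real" where
  "weight l s = exp (l * (s powr (\<kappa> + 1) / (\<kappa> + 1)))"

lemma q_pos: "0 < q"
  using beta_gt by (simp add: q_def)

lemma gamma_gt: "-1 < \<gamma>"
  using alpha_gt theta_pos by linarith

lemma kappa_gt: "-1 < \<kappa>"
  using beta_gt theta_pos by (simp add: \<kappa>_def less_divide_eq)

lemma powr_outer_exponent:
  assumes "0 < t"
  shows "t powr (- \<alpha> / (\<beta> + 1)) * (t powr (\<gamma> + 1)) powr q = t powr \<kappa>"
proof -
  have "- \<alpha> / (\<beta> + 1) + (\<gamma> + 1) * q = \<kappa>"
    unfolding \<kappa>_def q_def by (simp add: add_divide_distrib diff_divide_distrib)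
  then show ?thesis
    using assms by (simp add: powr_powr powr_add[symmetric])
qed

lemma outer_integrand_eq:
  "outer_integrand f \<alpha> \<beta> \<gamma> u t = t powr (- \<alpha> / (\<beta> + 1)) * integral {0..t} (inner_integrand f \<gamma> u) powr q"
  by (simp add: outer_integrand_def q_def)

lemma outer_integrand_nonneg: "0 \<le> outer_integrand f \<alpha> \<beta> \<gamma> u t"
  by (simp add: outer_integrand_def)

lemma integral_outer_integrand_nonneg: "0 \<le> integral {0..r} (outer_integrand f \<alpha> \<beta> \<gamma> u)"
  by (cases "outer_integrand f \<alpha> \<beta> \<gamma> u integrable_on {0..r}")
    (simp_all add: integral_nonneg outer_integrand_nonneg not_integrable_integral)

lemma inner_integral_bounds:
  assumes u: "continuous_into {0..R} {m..\<rho>} u" and t: "t \<in> {0..R}"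
  shows "inner_integrand f \<gamma> u integrable_on {0..t}"
    and "exp (f m) * t powr (\<gamma> + 1) / (\<gamma> + 1) \<le> integral {0..t} (inner_integrand f \<gamma> u)"
    and "integral {0..t} (inner_integrand f \<gamma> u) \<le> exp (f \<rho>) * t powr (\<gamma> + 1) / (\<gamma> + 1)"
proof -
  have powr_integral: "((\<lambda>s. C * s powr \<gamma>) has_integral C * t powr (\<gamma> + 1) / (\<gamma> + 1)) {0..t}" for C
    using has_integral_mult_right[OF has_integral_powr_from_0[OF gamma_gt]] t by auto
  have exp_f_u: "exp (f m) \<le> exp (f (u s))" "exp (f (u s)) \<le> exp (f \<rho>)" if "s \<in> {0..t}" for s
    using u t that f_mono by (auto simp: continuous_into_def image_subset_iff monoD)
  then have lower: "exp (f m) * s powr \<gamma> \<le> inner_integrand f \<gamma> u s"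
    and upper: "inner_integrand f \<gamma> u s \<le> exp (f \<rho>) * s powr \<gamma>" if "s \<in> {0..t}" for s
    using that by (simp_all add: inner_integrand_def mult.commute[of "s powr \<gamma>"] mult_right_mono)
  have "continuous_on {0<..t} u"
    using u t by (auto simp: continuous_into_def intro: continuous_on_subset)
  then have "continuous_on {0<..t} (inner_integrand f \<gamma> u)"
    unfolding inner_integrand_def
    by (intro continuous_intros continuous_on_compose2[OF f_continuous]) auto
  then show integrable: "inner_integrand f \<gamma> u integrable_on {0..t}"
  proof (rule integrable_on_Icc_if_dominated_on_Ioc)
    show "(\<lambda>s. exp (f \<rho>) * s powr \<gamma>) integrable_on {0..t}"
      using powr_integral by blast
    show "\<bar>inner_integrand f \<gamma> u s\<bar> \<le> exp (f \<rho>) * s powr \<gamma>" if "s \<in> {0<..t}" for s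
      using upper[of s] that by (simp add: inner_integrand_def)
  qed
  show "exp (f m) * t powr (\<gamma> + 1) / (\<gamma> + 1) \<le> integral {0..t} (inner_integrand f \<gamma> u)"
    using has_integral_le[OF powr_integral integrable_integral[OF integrable] lower] .
  show "integral {0..t} (inner_integrand f \<gamma> u) \<le> exp (f \<rho>) * t powr (\<gamma> + 1) / (\<gamma> + 1)"
    using has_integral_le[OF integrable_integral[OF integrable] powr_integral upper] .
qed

lemma weight_ge_1: "0 \<le> l \<Longrightarrow> 0 \<le> s \<Longrightarrow> 1 \<le> weight l s"
  using kappa_gt by (simp add: weight_def)

lemma weight_mono: "0 \<le> l \<Longrightarrow> 0 \<le> s \<Longrightarrow> s \<le> t \<Longrightarrow> weight l s \<le> weight l t"
  using kappa_gt by (auto simp: weight_def intro!: mult_left_mono divide_right_mono powr_mono2)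

lemma has_integral_weight:
  "0 < l \<Longrightarrow> 0 \<le> r \<Longrightarrow> ((\<lambda>t. t powr \<kappa> * weight l t) has_integral (weight l r - 1) / l) {0..r}"
  unfolding weight_def using kappa_gt by (intro has_integral_powr_mult_exp_powr) auto

lemma inner_integral_pos:
  assumes "continuous_into {0..R} {m..\<rho>} u" "t \<in> {0<..R}"
  shows "0 < integral {0..t} (inner_integrand f \<gamma> u)"
proof -
  have "0 < exp (f m) * t powr (\<gamma> + 1) / (\<gamma> + 1)"
    using assms gamma_gt by simp
  also have "\<dots> \<le> integral {0..t} (inner_integrand f \<gamma> u)"
    using inner_integral_bounds(2)[OF assms(1)] assms(2) by simp
  finally show ?thesis .
qed

lemma outer_integrand_le:
  assumes u: "continuous_into {0..R} {m..\<rho>} u" and t: "t \<in> {0..R}"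
  shows "outer_integrand f \<alpha> \<beta> \<gamma> u t \<le> (exp (f \<rho>) / (\<gamma> + 1)) powr q * t powr \<kappa>"
proof (cases "t = 0")
  case True
  then show ?thesis by (simp add: outer_integrand_def)
next
  case False
  then have "0 < t" using t by simp
  let ?C = "exp (f \<rho>) / (\<gamma> + 1)"
  have "0 < integral {0..t} (inner_integrand f \<gamma> u)"
    using inner_integral_pos[OF u] \<open>0 < t\<close> t by simp
  then have "integral {0..t} (inner_integrand f \<gamma> u) powr q \<le> (?C * t powr (\<gamma> + 1)) powr q"
    using inner_integral_bounds(3)[OF u t] q_pos by (intro powr_mono2) auto
  then have "outer_integrand f \<alpha> \<beta> \<gamma> u t \<le> t powr (- \<alpha> / (\<beta> + 1)) * (?C * t powr (\<gamma> + 1)) powr q"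
    unfolding outer_integrand_eq by (intro mult_left_mono) auto
  also have "\<dots> = ?C powr q * (t powr (- \<alpha> / (\<beta> + 1)) * (t powr (\<gamma> + 1)) powr q)"
    by (simp only: powr_mult mult_ac)
  also have "\<dots> = ?C powr q * t powr \<kappa>"
    by (simp only: powr_outer_exponent[OF \<open>0 < t\<close>])
  finally show ?thesis .
qed

lemma continuous_on_outer_integrand:
  assumes u: "continuous_into {0..R} {m..\<rho>} u" and "0 \<le> R"
  shows "continuous_on {0<..R} (outer_integrand f \<alpha> \<beta> \<gamma> u)"
proof -
  have "continuous_on {0..R} (\<lambda>t. integral {0..t} (inner_integrand f \<gamma> u))"
    using inner_integral_bounds(1)[OF u] \<open>0 \<le> R\<close> by (intro indefinite_integral_continuous_1) auto
  then have "continuous_on {0<..R} (\<lambda>t. integral {0..t} (inner_integrand f \<gamma> u))"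
    by (rule continuous_on_subset) auto
  moreover have "integral {0..t} (inner_integrand f \<gamma> u) \<noteq> 0" if "t \<in> {0<..R}" for t
    using inner_integral_pos[OF u that] by simp
  ultimately show ?thesis
    unfolding outer_integrand_eq[abs_def] by (intro continuous_intros) auto
qed

lemma outer_integrand_integrable:
  assumes u: "continuous_into {0..R} {m..\<rho>} u" and r: "r \<in> {0..R}"
  shows "outer_integrand f \<alpha> \<beta> \<gamma> u integrable_on {0..r}"
proof (rule integrable_on_Icc_if_dominated_on_Ioc)
  show "continuous_on {0<..r} (outer_integrand f \<alpha> \<beta> \<gamma> u)"
    using r by (intro continuous_on_subset[OF continuous_on_outer_integrand[OF u]]) auto
  show "(\<lambda>t. (exp (f \<rho>) / (\<gamma> + 1)) powr q * t powr \<kappa>) integrable_on {0..r}"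
    using has_integral_mult_right[OF has_integral_powr_from_0[OF kappa_gt]] r
    by (intro has_integral_integrable) auto
  show "\<bar>outer_integrand f \<alpha> \<beta> \<gamma> u t\<bar> \<le> (exp (f \<rho>) / (\<gamma> + 1)) powr q * t powr \<kappa>"
    if "t \<in> {0<..r}" for t
    using outer_integrand_le[OF u, of t] outer_integrand_nonneg[of u t] that r by simp
qed

lemma integral_outer_integrand_le:
  assumes u: "continuous_into {0..R} {m..\<rho>} u" and r: "r \<in> {0..R}"
  shows "integral {0..r} (outer_integrand f \<alpha> \<beta> \<gamma> u)
           \<le> (exp (f \<rho>) / (\<gamma> + 1)) powr q * (r powr (\<kappa> + 1) / (\<kappa> + 1))"
  using has_integral_le[OF integrable_integral[OF outer_integrand_integrable[OF u r]]
      has_integral_mult_right[OF has_integral_powr_from_0[OF kappa_gt]]] outer_integrand_le[OF u] r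
  by auto

lemma picard_maps_into:
  assumes m: "m \<le> \<rho> - (exp (f \<rho>) / (\<gamma> + 1)) powr q * (R powr (\<kappa> + 1) / (\<kappa> + 1))"
    and u: "continuous_into {0..R} {m..\<rho>} u" and "0 \<le> R"
  shows "continuous_into {0..R} {m..\<rho>} (picard \<rho> u)"
proof -
  have "continuous_on {0..R} (\<lambda>r. integral {0..r} (outer_integrand f \<alpha> \<beta> \<gamma> u))"
    using \<open>0 \<le> R\<close> by (intro indefinite_integral_continuous_1 outer_integrand_integrable[OF u]) auto
  then have "continuous_on {0..R} (picard \<rho> u)"
    unfolding picard_def[abs_def] by (intro continuous_intros)
  moreover have "picard \<rho> u r \<in> {m..\<rho>}" if r: "r \<in> {0..R}" for r
  proof -
    have "r powr (\<kappa> + 1) / (\<kappa> + 1) \<le> R powr (\<kappa> + 1) / (\<kappa> + 1)"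
      using r kappa_gt by (intro divide_right_mono powr_mono2) auto
    then have "integral {0..r} (outer_integrand f \<alpha> \<beta> \<gamma> u)
        \<le> (exp (f \<rho>) / (\<gamma> + 1)) powr q * (R powr (\<kappa> + 1) / (\<kappa> + 1))"
      by (rule order_trans[OF integral_outer_integrand_le[OF u r] mult_left_mono]) simp
    then show ?thesis
      using m integral_outer_integrand_nonneg by (simp add: picard_def)
  qed
  ultimately show ?thesis
    by (auto simp: continuous_into_def)
qed

lemma inner_integral_diff_le:
  assumes L: "L-lipschitz_on {m..\<rho>} (\<lambda>x. exp (f x))"
    and u: "continuous_into {0..R} {m..\<rho>} u" and v: "continuous_into {0..R} {m..\<rho>} v"
    and "0 \<le> l" "0 \<le> D" and uv: "\<forall>s\<in>{0..R}. \<bar>u s - v s\<bar> \<le> D * weight l s"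
    and t: "t \<in> {0..R}"
  shows "\<bar>integral {0..t} (inner_integrand f \<gamma> u) - integral {0..t} (inner_integrand f \<gamma> v)\<bar>
           \<le> L * D * weight l t * t powr (\<gamma> + 1) / (\<gamma> + 1)"
proof -
  let ?B = "L * D * weight l t"
  have bound_integral: "((\<lambda>s. ?B * s powr \<gamma>) has_integral ?B * t powr (\<gamma> + 1) / (\<gamma> + 1)) {0..t}"
    using has_integral_mult_right[OF has_integral_powr_from_0[OF gamma_gt]] t by auto
  have "\<bar>inner_integrand f \<gamma> u s - inner_integrand f \<gamma> v s\<bar> \<le> ?B * s powr \<gamma>"
    if s: "s \<in> {0..t}" for s
  proof -
    have "u s \<in> {m..\<rho>}" "v s \<in> {m..\<rho>}"
      using u v s t by (auto simp: continuous_into_def image_subset_iff)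
    then have "\<bar>exp (f (u s)) - exp (f (v s))\<bar> \<le> L * \<bar>u s - v s\<bar>"
      using lipschitz_onD[OF L] by (simp add: dist_real_def)
    also have "\<dots> \<le> L * (D * weight l t)"
    proof (rule mult_left_mono[OF _ lipschitz_on_nonneg[OF L]])
      have "\<bar>u s - v s\<bar> \<le> D * weight l s"
        using uv s t by auto
      also have "\<dots> \<le> D * weight l t"
        using weight_mono[OF \<open>0 \<le> l\<close>, of s t] s \<open>0 \<le> D\<close> by (intro mult_left_mono) auto
      finally show "\<bar>u s - v s\<bar> \<le> D * weight l t" .
    qed
    finally have "\<bar>exp (f (u s)) - exp (f (v s))\<bar> \<le> ?B"
      by (simp only: mult.assoc)
    then show ?thesis
      by (simp add: inner_integrand_def right_diff_distrib[symmetric] abs_mult mult.commute mult_left_mono)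
  qed
  then have "norm (integral {0..t} (\<lambda>s. inner_integrand f \<gamma> u s - inner_integrand f \<gamma> v s))
      \<le> integral {0..t} (\<lambda>s. ?B * s powr \<gamma>)"
    using inner_integral_bounds(1)[OF u t] inner_integral_bounds(1)[OF v t]
    by (intro integral_norm_bound_integral integrable_diff has_integral_integrable[OF bound_integral]) auto
  then show ?thesis
    using integral_diff[OF inner_integral_bounds(1)[OF u t] inner_integral_bounds(1)[OF v t]]
      integral_unique[OF bound_integral] by simp
qed

(* With c0 = e^f(m) / (\<gamma>+1), C0 = e^f(\<rho>) / (\<gamma>+1) and T = t^(\<gamma>+1), the inner integral
   lies in [c0 T, C0 T], where the derivative of x powr q is at most
   q (c0^(q-1) + C0^(q-1)) T^(q-1); L is a Lipschitz constant of exp o f on [m, \<rho>]. *)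
definition outer_lipschitz_const :: "real \<Rightarrow> real \<Rightarrow> real \<Rightarrow> real" where
  "outer_lipschitz_const m \<rho> L =
     q * ((exp (f m) / (\<gamma> + 1)) powr (q - 1) + (exp (f \<rho>) / (\<gamma> + 1)) powr (q - 1)) * L / (\<gamma> + 1)"

lemma outer_lipschitz_const_nonneg: "0 \<le> L \<Longrightarrow> 0 \<le> outer_lipschitz_const m \<rho> L"
  using q_pos gamma_gt by (simp add: outer_lipschitz_const_def)

lemma inner_integral_powr_diff_le:
  assumes L: "L-lipschitz_on {m..\<rho>} (\<lambda>x. exp (f x))"
    and u: "continuous_into {0..R} {m..\<rho>} u" and v: "continuous_into {0..R} {m..\<rho>} v"
    and l: "0 \<le> l" and D: "0 \<le> D" and uv: "\<forall>s\<in>{0..R}. \<bar>u s - v s\<bar> \<le> D * weight l s"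
    and t: "t \<in> {0<..R}"
  shows "\<bar>integral {0..t} (inner_integrand f \<gamma> u) powr q - integral {0..t} (inner_integrand f \<gamma> v) powr q\<bar>
           \<le> outer_lipschitz_const m \<rho> L * D * weight l t * (t powr (\<gamma> + 1)) powr q"
proof -
  define T where "T = t powr (\<gamma> + 1)"
  define c0 where "c0 = exp (f m) / (\<gamma> + 1)"
  define C0 where "C0 = exp (f \<rho>) / (\<gamma> + 1)"
  let ?Iu = "integral {0..t} (inner_integrand f \<gamma> u)"
  let ?Iv = "integral {0..t} (inner_integrand f \<gamma> v)"
  have t': "t \<in> {0..R}" and "0 < T" "0 < c0"
    using t gamma_gt by (simp_all add: T_def c0_def)
  have Iu: "?Iu \<in> {c0 * T..C0 * T}" and Iv: "?Iv \<in> {c0 * T..C0 * T}"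
    using inner_integral_bounds(2,3)[OF u t'] inner_integral_bounds(2,3)[OF v t']
    by (simp_all add: T_def c0_def C0_def)
  have "\<bar>?Iu powr q - ?Iv powr q\<bar> \<le> \<bar>q\<bar> * ((c0 * T) powr (q - 1) + (C0 * T) powr (q - 1)) * \<bar>?Iu - ?Iv\<bar>"
    using \<open>0 < T\<close> \<open>0 < c0\<close> by (intro abs_powr_diff_le[OF _ Iu Iv]) simp
  also have "\<dots> = q * (c0 powr (q - 1) + C0 powr (q - 1)) * T powr (q - 1) * \<bar>?Iu - ?Iv\<bar>"
    using q_pos by (simp only: powr_mult abs_of_pos distrib_right mult.assoc)
  also have "\<dots> \<le> q * (c0 powr (q - 1) + C0 powr (q - 1)) * T powr (q - 1) * (L * D * weight l t * T / (\<gamma> + 1))"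
    using inner_integral_diff_le[OF L u v l D uv t'] q_pos by (intro mult_left_mono) (simp_all add: T_def)
  also have "\<dots> = outer_lipschitz_const m \<rho> L * D * weight l t * (T powr (q - 1) * T)"
    unfolding outer_lipschitz_const_def c0_def[symmetric] C0_def[symmetric]
    by (simp only: mult_ac times_divide_eq_right times_divide_eq_left)
  also have "T powr (q - 1) * T = T powr q"
    using powr_mult_base[of T "q - 1"] \<open>0 < T\<close> by (simp add: mult.commute)
  finally show ?thesis
    by (simp only: T_def)
qed

lemma outer_integrand_diff_le:
  assumes L: "L-lipschitz_on {m..\<rho>} (\<lambda>x. exp (f x))"
    and u: "continuous_into {0..R} {m..\<rho>} u" and v: "continuous_into {0..R} {m..\<rho>} v"
    and l: "0 \<le> l" and D: "0 \<le> D" and uv: "\<forall>s\<in>{0..R}. \<bar>u s - v s\<bar> \<le> D * weight l s"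
    and t: "t \<in> {0..R}"
  shows "\<bar>outer_integrand f \<alpha> \<beta> \<gamma> u t - outer_integrand f \<alpha> \<beta> \<gamma> v t\<bar>
           \<le> outer_lipschitz_const m \<rho> L * D * (t powr \<kappa> * weight l t)"
proof (cases "t = 0")
  case True
  then show ?thesis by (simp add: outer_integrand_def)
next
  case False
  then have "0 < t" "t \<in> {0<..R}" using t by simp_all
  let ?M = "outer_lipschitz_const m \<rho> L * D * weight l t"
  have "\<bar>outer_integrand f \<alpha> \<beta> \<gamma> u t - outer_integrand f \<alpha> \<beta> \<gamma> v t\<bar>
      = t powr (- \<alpha> / (\<beta> + 1)) *
        \<bar>integral {0..t} (inner_integrand f \<gamma> u) powr q - integral {0..t} (inner_integrand f \<gamma> v) powr q\<bar>"
    by (simp add: outer_integrand_eq right_diff_distrib[symmetric] abs_mult)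
  also have "\<dots> \<le> t powr (- \<alpha> / (\<beta> + 1)) * (?M * (t powr (\<gamma> + 1)) powr q)"
    using inner_integral_powr_diff_le[OF L u v l D uv \<open>t \<in> {0<..R}\<close>] by (rule mult_left_mono) simp
  also have "\<dots> = ?M * (t powr (- \<alpha> / (\<beta> + 1)) * (t powr (\<gamma> + 1)) powr q)"
    by (simp only: mult_ac)
  also have "\<dots> = outer_lipschitz_const m \<rho> L * D * (t powr \<kappa> * weight l t)"
    unfolding powr_outer_exponent[OF \<open>0 < t\<close>] by (simp only: mult_ac)
  finally show ?thesis .
qed

lemma picard_diff_le:
  assumes L: "L-lipschitz_on {m..\<rho>} (\<lambda>x. exp (f x))"
    and u: "continuous_into {0..R} {m..\<rho>} u" and v: "continuous_into {0..R} {m..\<rho>} v"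
    and "0 < l" and D: "0 \<le> D" and uv: "\<forall>t\<in>{0..R}. \<bar>u t - v t\<bar> \<le> D * weight l t"
    and s: "s \<in> {0..R}"
  shows "\<bar>picard \<rho> u s - picard \<rho> v s\<bar> \<le> outer_lipschitz_const m \<rho> L / l * D * weight l s"
proof -
  let ?M = "outer_lipschitz_const m \<rho> L"
  have "0 \<le> ?M"
    using lipschitz_on_nonneg[OF L] by (rule outer_lipschitz_const_nonneg)
  have bound_integral:
    "((\<lambda>t. ?M * D * (t powr \<kappa> * weight l t)) has_integral ?M * D * ((weight l s - 1) / l)) {0..s}"
    using has_integral_mult_right[OF has_integral_weight[OF \<open>0 < l\<close>, of s], of "?M * D"] s by simp
  have "norm (integral {0..s} (\<lambda>t. outer_integrand f \<alpha> \<beta> \<gamma> u t - outer_integrand f \<alpha> \<beta> \<gamma> v t))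
      \<le> integral {0..s} (\<lambda>t. ?M * D * (t powr \<kappa> * weight l t))"
    using s outer_integrand_diff_le[OF L u v less_imp_le[OF \<open>0 < l\<close>] D uv]
    by (intro integral_norm_bound_integral integrable_diff outer_integrand_integrable[OF u]
        outer_integrand_integrable[OF v] has_integral_integrable[OF bound_integral]) auto
  also have "\<dots> = ?M * D * ((weight l s - 1) / l)"
    using integral_unique[OF bound_integral] .
  also have "\<dots> \<le> ?M * D * (weight l s / l)"
    using \<open>0 \<le> ?M\<close> D \<open>0 < l\<close> by (intro mult_left_mono divide_right_mono) auto
  finally show ?thesis
    using integral_diff[OF outer_integrand_integrable[OF u s] outer_integrand_integrable[OF v s]]
    by (simp add: picard_def abs_minus_commute)
qed

lemma picard_weighted_contraction:
  assumes "m \<le> \<rho>"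
  obtains M where "\<And>l R. M < l \<Longrightarrow> weighted_contraction {0..R} m \<rho> (weight l) (M / l) (picard \<rho>)"
proof -
  obtain L where L: "L-lipschitz_on {m..\<rho>} (\<lambda>x. exp (f x))"
    using exp_f_lipschitz by blast
  let ?M = "outer_lipschitz_const m \<rho> L"
  have "0 \<le> ?M"
    using lipschitz_on_nonneg[OF L] by (rule outer_lipschitz_const_nonneg)
  have "weighted_contraction {0..R} m \<rho> (weight l) (?M / l) (picard \<rho>)" if "?M < l" for l R
  proof
    have "0 < l" using \<open>0 \<le> ?M\<close> that by simp
    then show "1 \<le> weight l s" if "s \<in> {0..R}" for s
      using weight_ge_1 that by simp
    show "bdd_above (weight l ` {0..R})"
      using weight_mono \<open>0 < l\<close> by (intro bdd_aboveI2[of _ _ "weight l R"]) auto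
    show "0 \<le> ?M / l" "?M / l < 1"
      using \<open>0 \<le> ?M\<close> \<open>0 < l\<close> that by simp_all
    show "\<bar>picard \<rho> u s - picard \<rho> v s\<bar> \<le> ?M / l * D * weight l s"
      if "continuous_into {0..R} {m..\<rho>} u" "continuous_into {0..R} {m..\<rho>} v" "0 \<le> D"
        "\<forall>t\<in>{0..R}. \<bar>u t - v t\<bar> \<le> D * weight l t" "s \<in> {0..R}" for u v D s
      using picard_diff_le[OF L that(1,2) \<open>0 < l\<close> that(3-5)] .
  qed
  then show thesis
    using that by blast
qed

definition local_solution :: "real \<Rightarrow> real \<Rightarrow> (real \<Rightarrow> real) \<Rightarrow> bool" where
  "local_solution \<rho> R u \<longleftrightarrow> continuous_on {0..R} u \<and> (\<forall>r\<in>{0..R}. picard \<rho> u r = u r)"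

lemma local_solution_mono:
  "local_solution \<rho> R u \<Longrightarrow> R' \<le> R \<Longrightarrow> local_solution \<rho> R' u"
  unfolding local_solution_def by (auto intro: continuous_on_subset)

lemma local_solution_bounds:
  assumes "local_solution \<rho> R u"
  obtains m where "m \<le> \<rho>" "continuous_into {0..R} {m..\<rho>} u"
proof -
  have cont: "continuous_on {0..R} u"
    using assms by (simp add: local_solution_def)
  obtain a where a: "\<forall>s\<in>{0..R}. \<bar>u s\<bar> \<le> a"
    using compact_imp_bounded[OF compact_continuous_image[OF cont compact_Icc]]
    by (auto simp: bounded_real)
  have "u s \<le> \<rho>" if "s \<in> {0..R}" for s
  proof -
    have "picard \<rho> u s = u s"
      using assms that by (simp add: local_solution_def)
    then show ?thesis
      using integral_outer_integrand_nonneg[of s u] by (simp add: picard_def)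
  qed
  then have "continuous_into {0..R} {min (- a) \<rho>..\<rho>} u"
    using cont a by (force simp: continuous_into_def abs_le_iff)
  then show thesis
    using that[of "min (- a) \<rho>"] by simp
qed

lemma local_solution_unique:
  assumes u: "local_solution \<rho> R u" and v: "local_solution \<rho> R v" and s: "s \<in> {0..R}"
  shows "u s = v s"
proof -
  obtain m1 m2 where "m1 \<le> \<rho>" "continuous_into {0..R} {m1..\<rho>} u"
    and "m2 \<le> \<rho>" "continuous_into {0..R} {m2..\<rho>} v"
    using local_solution_bounds[OF u] local_solution_bounds[OF v] by metis
  then have m: "min m1 m2 \<le> \<rho>" and into: "continuous_into {0..R} {min m1 m2..\<rho>} u"
    "continuous_into {0..R} {min m1 m2..\<rho>} v"
    by (force simp: continuous_into_def image_subset_iff)+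
  obtain M where "\<And>l. M < l \<Longrightarrow> weighted_contraction {0..R} (min m1 m2) \<rho> (weight l) (M / l) (picard \<rho>)"
    using picard_weighted_contraction[OF m] by metis
  then interpret weighted_contraction "{0..R}" "min m1 m2" \<rho> "weight (M + 1)" "M / (M + 1)" "picard \<rho>"
    by simp
  show ?thesis
    using fixpoint_unique[OF into(1) _ into(2)] u v s by (simp add: local_solution_def)
qed

lemma local_solution_exists:
  assumes "0 \<le> R"
  obtains u where "local_solution \<rho> R u"
proof -
  define m where "m = \<rho> - (exp (f \<rho>) / (\<gamma> + 1)) powr q * (R powr (\<kappa> + 1) / (\<kappa> + 1))"
  have "m \<le> \<rho>"
    using kappa_gt by (simp add: m_def)
  obtain M where "\<And>l. M < l \<Longrightarrow> weighted_contraction {0..R} m \<rho> (weight l) (M / l) (picard \<rho>)"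
    using picard_weighted_contraction[OF \<open>m \<le> \<rho>\<close>] by metis
  then have "weighted_contraction {0..R} m \<rho> (weight (M + 1)) (M / (M + 1)) (picard \<rho>)"
    by simp
  moreover have "continuous_into {0..R} {m..\<rho>} (picard \<rho> u)" if "continuous_into {0..R} {m..\<rho>} u" for u
    using picard_maps_into[OF _ that assms] by (simp add: m_def)
  ultimately interpret weighted_self_contraction "{0..R}" m \<rho> "weight (M + 1)" "M / (M + 1)" "picard \<rho>"
    using \<open>m \<le> \<rho>\<close> by (intro weighted_self_contraction.intro weighted_self_contraction_axioms.intro)
  show thesis
    using that[of fixpoint] fixpoint_into fixpoint_fixed
    by (simp add: local_solution_def continuous_into_def)
qed

lemma picard_cong:
  assumes "\<forall>s\<in>{0..r}. u s = v s"
  shows "picard \<rho> u r = picard \<rho> v r"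
proof -
  have "outer_integrand f \<alpha> \<beta> \<gamma> u t = outer_integrand f \<alpha> \<beta> \<gamma> v t" if "t \<in> {0..r}" for t
  proof -
    have "integral {0..t} (inner_integrand f \<gamma> u) = integral {0..t} (inner_integrand f \<gamma> v)"
      using assms that by (intro integral_cong) (auto simp: inner_integrand_def)
    then show ?thesis
      by (simp add: outer_integrand_def)
  qed
  then have "integral {0..r} (outer_integrand f \<alpha> \<beta> \<gamma> u) = integral {0..r} (outer_integrand f \<alpha> \<beta> \<gamma> v)"
    by (intro integral_cong) auto
  then show ?thesis
    by (simp add: picard_def)
qed

lemma solves_IE_iff:
  "solves_IE f \<alpha> \<beta> \<gamma> \<rho> u \<longleftrightarrow> continuous_on {0..} u \<and> (\<forall>R\<ge>0. local_solution \<rho> R u)"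
proof
  assume "solves_IE f \<alpha> \<beta> \<gamma> \<rho> u"
  then have cont: "continuous_on {0..} u" and fixed: "\<forall>r\<ge>0. picard \<rho> u r = u r"
    by (auto simp: solves_IE_def picard_def)
  have "local_solution \<rho> R u" for R
    using continuous_on_subset[OF cont, of "{0..R}"] fixed by (auto simp: local_solution_def)
  then show "continuous_on {0..} u \<and> (\<forall>R\<ge>0. local_solution \<rho> R u)"
    using cont by blast
next
  assume sol: "continuous_on {0..} u \<and> (\<forall>R\<ge>0. local_solution \<rho> R u)"
  have "inner_integrand f \<gamma> u integrable_on {0..r} \<and> outer_integrand f \<alpha> \<beta> \<gamma> u integrable_on {0..r}"
    if "0 \<le> r" for r
  proof -
    have "local_solution \<rho> r u"
      using sol that by blast
    then obtain m where "m \<le> \<rho>" "continuous_into {0..r} {m..\<rho>} u"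
      by (rule local_solution_bounds)
    then show ?thesis
      using that inner_integral_bounds(1) outer_integrand_integrable by simp
  qed
  then show "solves_IE f \<alpha> \<beta> \<gamma> \<rho> u"
    using sol by (auto simp: solves_IE_def local_solution_def picard_def)
qed

lemma local_solutions_glue:
  assumes sol: "\<And>n::nat. local_solution \<rho> (real n) (sol n)" and "0 \<le> R"
  shows "local_solution \<rho> R (\<lambda>s. sol (nat \<lceil>s\<rceil>) s)"
proof -
  define n where "n = nat \<lceil>R\<rceil>"
  have "R \<le> real n"
    unfolding n_def by (rule real_nat_ceiling_ge)
  then have sol_R: "local_solution \<rho> R (sol n)"
    by (rule local_solution_mono[OF sol])
  have glued_eq: "sol (nat \<lceil>s\<rceil>) s = sol n s" if "s \<in> {0..R}" for s
  proof (rule local_solution_unique[of \<rho> s "sol (nat \<lceil>s\<rceil>)" "sol n"])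
    show "local_solution \<rho> s (sol (nat \<lceil>s\<rceil>))"
      using real_nat_ceiling_ge by (rule local_solution_mono[OF sol])
    show "local_solution \<rho> s (sol n)"
      using that \<open>R \<le> real n\<close> by (intro local_solution_mono[OF sol]) auto
  qed (use that in simp)
  have "continuous_on {0..R} (sol n)"
    using sol_R by (simp add: local_solution_def)
  then have "continuous_on {0..R} (\<lambda>s. sol (nat \<lceil>s\<rceil>) s)"
    by (rule continuous_on_eq) (use glued_eq in auto)
  moreover have "picard \<rho> (\<lambda>s. sol (nat \<lceil>s\<rceil>) s) r = sol (nat \<lceil>r\<rceil>) r" if "r \<in> {0..R}" for r
  proof -
    have "picard \<rho> (\<lambda>s. sol (nat \<lceil>s\<rceil>) s) r = picard \<rho> (sol n) r"
      using glued_eq that by (intro picard_cong) auto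
    also have "\<dots> = sol n r"
      using sol_R that by (simp add: local_solution_def)
    finally show ?thesis
      using glued_eq[OF that] by simp
  qed
  ultimately show ?thesis
    by (simp add: local_solution_def)
qed

theorem exists_unique_solution:
  "\<exists>u. solves_IE f \<alpha> \<beta> \<gamma> \<rho> u \<and> (\<forall>v. solves_IE f \<alpha> \<beta> \<gamma> \<rho> v \<longrightarrow> (\<forall>r\<ge>0. v r = u r))"
proof -
  have "\<exists>u. local_solution \<rho> (real n) u" for n :: nat
    by (rule local_solution_exists[of "real n"]) auto
  then have "\<exists>sol. \<forall>n::nat. local_solution \<rho> (real n) (sol n)"
    by (intro choice allI)
  then obtain sol where "\<forall>n::nat. local_solution \<rho> (real n) (sol n)" ..
  then have sol: "local_solution \<rho> (real n) (sol n)" for n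
    by blast
  have U_local: "local_solution \<rho> R (\<lambda>s. sol (nat \<lceil>s\<rceil>) s)" if "0 \<le> R" for R
    by (rule local_solutions_glue[OF sol that])
  then have "continuous_on {0..} (\<lambda>s. sol (nat \<lceil>s\<rceil>) s)"
    by (intro continuous_on_atLeast_if_continuous_on_Icc) (simp add: local_solution_def)
  then have "solves_IE f \<alpha> \<beta> \<gamma> \<rho> (\<lambda>s. sol (nat \<lceil>s\<rceil>) s)"
    using U_local by (simp add: solves_IE_iff)
  moreover have "v r = sol (nat \<lceil>r\<rceil>) r" if "solves_IE f \<alpha> \<beta> \<gamma> \<rho> v" "0 \<le> r" for v r
  proof (rule local_solution_unique[OF _ U_local[OF that(2)]])
    show "local_solution \<rho> r v"
      using that by (simp add: solves_IE_iff)
  qed (use that(2) in simp)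
  ultimately show ?thesis
    by blast
qed

end

lemma radial_integral_equation_if_C1_nondecreasing:
  fixes f f' :: "real \<Rightarrow> real"
  assumes f': "\<And>x. (f has_real_derivative f' x) (at x)"
    and f'_cont: "continuous_on UNIV f'" and f'_nonneg: "\<And>x. 0 \<le> f' x"
    and "\<beta> + 1 < \<alpha>" "0 < \<beta> + 1" "0 < \<gamma> + 2 + \<beta> - \<alpha>"
  shows "radial_integral_equation f \<alpha> \<beta> \<gamma>"
proof
  have "f x \<le> f y" if "x \<le> y" for x y
    using that by (rule DERIV_nonneg_imp_nondecreasing) (use f' f'_nonneg in blast)
  then show "mono f"
    by (rule monoI)
  show f_cont: "continuous_on UNIV f"
    using f' by (intro continuous_at_imp_continuous_on ballI DERIV_isCont) blast
  show "\<exists>L. L-lipschitz_on {a..b} (\<lambda>x. exp (f x))" for a b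
  proof -
    have deriv: "((\<lambda>x. exp (f x)) has_real_derivative exp (f x) * f' x) (at x)" for x
      using f' by (auto intro!: derivative_eq_intros)
    have "continuous_on {a..b} f" "continuous_on {a..b} f'"
      using f_cont f'_cont by (meson continuous_on_subset subset_UNIV)+
    then have "continuous_on {a..b} (\<lambda>x. exp (f x) * f' x)"
      by (intro continuous_intros)
    then obtain L where "L-lipschitz_on {a..b} (\<lambda>x. exp (f x))"
      using lipschitz_on_Icc_if_continuous_deriv[OF deriv] by blast
    then show ?thesis
      by blast
  qed
qed (use assms in auto)

theorem mainTheorem13:
  fixes f :: "real \<Rightarrow> real" and \<alpha> \<beta> \<gamma> \<theta> :: real
  assumes B1_C1: "\<exists>f'. (\<forall>x. (f has_real_derivative f' x) (at x)) \<and> continuous_on UNIV f'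
                      \<and> (\<forall>x. f' x > 0)"
    and B1_lim: "filterlim f at_top at_top"
    and B3_1: "\<alpha> > \<beta> + 1" and B3_2: "\<beta> + 1 > 0"
    and B3_theta: "\<theta> = \<gamma> + 2 + \<beta> - \<alpha>" and B3_3: "\<theta> > 0"
  shows "\<forall>\<rho>::real. \<exists>u. solves_IE f \<alpha> \<beta> \<gamma> \<rho> u \<and>
            (\<forall>v. solves_IE f \<alpha> \<beta> \<gamma> \<rho> v \<longrightarrow> (\<forall>r\<ge>0. v r = u r))"
proof -
  obtain f' where "\<And>x. (f has_real_derivative f' x) (at x)" "continuous_on UNIV f'" "\<And>x. 0 < f' x"
    using B1_C1 by blast
  then interpret radial_integral_equation f \<alpha> \<beta> \<gamma>
    using B3_1 B3_2 B3_theta B3_3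
    by (intro radial_integral_equation_if_C1_nondecreasing) (auto simp: less_imp_le)
  show ?thesis
    using exists_unique_solution by blast
qed

end
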